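(* Let $Q$ be a multiplicative equivariantly supported based quantal frame with base locale $A$ and support $\varsigma$. Consider the localic graph with $\mathcal O(G_0)=A$, $\mathcal O(G_1)=Q$, $d:G_1\to G_0$ given by $d^*(a)=a\triangleright 1_Q$, $i:G_1\to G_1$ given by $i^*(x)=x^*$, $r=d\circ i$, $G_2$ the pullback of $r$ and $d$ (so $\mathcal O(G_2)=Q\otimes_A Q$, with projections $\pi_1,\pi_2:G_2\to G_1$ satisfying $r\circ\pi_1=d\circ\pi_2$), and $m:G_2\to G_1$ defined by $m^*(a)=\bigvee_{xy\le a}x\otimes y$. Then $G$ is an involutive open semicategory (in particular $d\circ m=d\circ\pi_1$ and $r\circ m=r\circ\pi_2$, $m$ is associative, $i$ is an involution for $m$, and $d$ is open).
   Context: For a locale $A$, an $A$-$A$-bimodule is a sup-lattice $M$ with actions $a\triangleright m$, $m\triangleleft a$ preserving joins in each variable, with $1_A\triangleright m=m$, $(a\wedge b)\triangleright m=a\triangleright(b\triangleright m)$, $m\triangleleft1_A=m$, $m\triangleleft(a\wedge b)=(m\triangleleft a)\triangleleft b$, $(a\triangleright m)\triangleleft b=a\triangleright(m\triangleleft b)$. An $A$-$A$-quantale is such a $Q$ with associative join-preserving multiplication and $(a\triangleright x)y=a\triangleright(xy)$, $(x\triangleleft a)y=x(a\triangleright y)$, $(xy)\triangleleft a=x(y\triangleleft a)$; involutive if there is a join-preserving $x\mapsto x^*$ with $x^{**}=x$, $(xy)^*=y^*x^*$, $(a\triangleright(x\triangleleft b))^*=b\triangleright(x^*\triangleleft a)$.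 $1_Q$ is the top. A support is a join-preserving $\varsigma:Q\to A$ with $\varsigma(1_Q)=1_A$, $\varsigma(x)\triangleright y\le xx^*y$, $\varsigma(x)\triangleright x=x$; equivariant if $\varsigma(a\triangleright x)=a\wedge\varsigma(x)$. A based quantal frame is an involutive $A$-$A$-quantale which is a frame with $(a\triangleright x)\wedge y=a\triangleright(x\wedge y)$, $(x\triangleleft a)\wedge y=(x\wedge y)\triangleleft a$. $Q\otimes_AQ$ is the quotient of the sup-lattice tensor product $Q\otimes Q$ by $x\otimes(a\triangleright y)=(x\triangleleft a)\otimes y$; the multiplication induces $\mu_A:Q\otimes_AQ\to Q$, and $Q$ is multiplicative if the right adjoint of $\mu_A$ preserves arbitrary joins. An involutive open semicategory is an internal category without units in locales (associative composition $m$ with $d\circ m=d\circ\pi_1$, $r\circ m=r\circ\pi_2$), equipped with an involution $i$ ($i\circ i=\mathrm{id}$, $d\circ i=r$) that reverses composition, and with $d$ an open map. *)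

theory Defs
  imports Main
begin

definition frame_law :: "'a::complete_lattice itself \<Rightarrow> bool" where
  "frame_law _ \<longleftrightarrow> (\<forall>(x::'a) S. inf x (Sup S) = (SUP s\<in>S. inf x s))"

definition frame_hom :: "('a::complete_lattice \<Rightarrow> 'b::complete_lattice) \<Rightarrow> bool" where
  "frame_hom f \<longleftrightarrow> (\<forall>S. f (Sup S) = Sup (f ` S)) \<and> (\<forall>x y. f (inf x y) = inf (f x) (f y)) \<and> f top = top"

text \<open>A locale map is open iff its inverse image map has a left adjoint satisfying
  Frobenius reciprocity (Joyal--Tierney).\<close>
definition open_frame_hom :: "('a::complete_lattice \<Rightarrow> 'b::complete_lattice) \<Rightarrow> bool" where
  "open_frame_hom f \<longleftrightarrow> (\<exists>g. (\<forall>x a. g x \<le> a \<longleftrightarrow> x \<le> f a) \<and> (\<forall>x a. g (inf x (f a)) = inf (g x) a))"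

definition bimodule ::
  "('a::complete_lattice \<Rightarrow> 'q::complete_lattice \<Rightarrow> 'q) \<Rightarrow> ('q \<Rightarrow> 'a \<Rightarrow> 'q) \<Rightarrow> bool" where
  "bimodule lact ract \<longleftrightarrow>
     (\<forall>S m. lact (Sup S) m = (SUP a\<in>S. lact a m)) \<and>
     (\<forall>a M. lact a (Sup M) = (SUP m\<in>M. lact a m)) \<and>
     (\<forall>M a. ract (Sup M) a = (SUP m\<in>M. ract m a)) \<and>
     (\<forall>m S. ract m (Sup S) = (SUP a\<in>S. ract m a)) \<and>
     (\<forall>m. lact top m = m) \<and>
     (\<forall>a b m. lact (inf a b) m = lact a (lact b m)) \<and>
     (\<forall>m. ract m top = m) \<and>
     (\<forall>a b m. ract m (inf a b) = ract (ract m a) b) \<and>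
     (\<forall>a b m. ract (lact a m) b = lact a (ract m b))"

definition AA_quantale ::
  "('a::complete_lattice \<Rightarrow> 'q::complete_lattice \<Rightarrow> 'q) \<Rightarrow> ('q \<Rightarrow> 'a \<Rightarrow> 'q) \<Rightarrow> ('q \<Rightarrow> 'q \<Rightarrow> 'q) \<Rightarrow> bool" where
  "AA_quantale lact ract mult \<longleftrightarrow>
     bimodule lact ract \<and>
     (\<forall>x y z. mult (mult x y) z = mult x (mult y z)) \<and>
     (\<forall>X y. mult (Sup X) y = (SUP x\<in>X. mult x y)) \<and>
     (\<forall>x Y. mult x (Sup Y) = (SUP y\<in>Y. mult x y)) \<and>
     (\<forall>a x y. mult (lact a x) y = lact a (mult x y)) \<and>
     (\<forall>a x y. mult (ract x a) y = mult x (lact a y)) \<and>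
     (\<forall>a x y. ract (mult x y) a = mult x (ract y a))"

definition involutive_AA_quantale ::
  "('a::complete_lattice \<Rightarrow> 'q::complete_lattice \<Rightarrow> 'q) \<Rightarrow> ('q \<Rightarrow> 'a \<Rightarrow> 'q) \<Rightarrow> ('q \<Rightarrow> 'q \<Rightarrow> 'q)
     \<Rightarrow> ('q \<Rightarrow> 'q) \<Rightarrow> bool" where
  "involutive_AA_quantale lact ract mult star \<longleftrightarrow>
     AA_quantale lact ract mult \<and>
     (\<forall>X. star (Sup X) = (SUP x\<in>X. star x)) \<and>
     (\<forall>x. star (star x) = x) \<and>
     (\<forall>x y. star (mult x y) = mult (star y) (star x)) \<and>
     (\<forall>a b x. star (lact a (ract x b)) = lact b (ract (star x) a))"

definition based_quantal_frame ::
  "('a::complete_lattice \<Rightarrow> 'q::complete_lattice \<Rightarrow> 'q) \<Rightarrow> ('q \<Rightarrow> 'a \<Rightarrow> 'q) \<Rightarrow> ('q \<Rightarrow> 'q \<Rightarrow> 'q)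
     \<Rightarrow> ('q \<Rightarrow> 'q) \<Rightarrow> bool" where
  "based_quantal_frame lact ract mult star \<longleftrightarrow>
     frame_law TYPE('a) \<and> frame_law TYPE('q) \<and>
     involutive_AA_quantale lact ract mult star \<and>
     (\<forall>a x y. inf (lact a x) y = lact a (inf x y)) \<and>
     (\<forall>a x y. inf (ract x a) y = ract (inf x y) a)"

definition support ::
  "('a::complete_lattice \<Rightarrow> 'q::complete_lattice \<Rightarrow> 'q) \<Rightarrow> ('q \<Rightarrow> 'q \<Rightarrow> 'q) \<Rightarrow> ('q \<Rightarrow> 'q)
     \<Rightarrow> ('q \<Rightarrow> 'a) \<Rightarrow> bool" where
  "support lact mult star supp \<longleftrightarrow>
     (\<forall>X. supp (Sup X) = (SUP x\<in>X. supp x)) \<and>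
     supp top = top \<and>
     (\<forall>x y. lact (supp x) y \<le> mult (mult x (star x)) y) \<and>
     (\<forall>x. lact (supp x) x = x)"

definition equivariant_support ::
  "('a::complete_lattice \<Rightarrow> 'q::complete_lattice \<Rightarrow> 'q) \<Rightarrow> ('q \<Rightarrow> 'q \<Rightarrow> 'q) \<Rightarrow> ('q \<Rightarrow> 'q)
     \<Rightarrow> ('q \<Rightarrow> 'a) \<Rightarrow> bool" where
  "equivariant_support lact mult star supp \<longleftrightarrow>
     support lact mult star supp \<and> (\<forall>a x. supp (lact a x) = inf a (supp x))"

text \<open>Joyal--Tierney representation: elements of the sup-lattice tensor product
  Q \<otimes> Q are the subsets S of Q \<times> Q that are down-closed and closed under joins
  (including empty joins) in each variable; S corresponds to the join of the x \<otimes> y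
  with (x,y) \<in> S, and x \<otimes> y \<le> S iff (x,y) \<in> S.  The quotient by the relations
  x \<otimes> (a \<triangleright> y) = (x \<triangleleft> a) \<otimes> y is the meet-closed subset of those S with
  (x, a \<triangleright> y) \<in> S \<longleftrightarrow> (x \<triangleleft> a, y) \<in> S.  Order is inclusion, meets are intersections.\<close>

definition tensA_closed ::
  "('a \<Rightarrow> 'q::complete_lattice \<Rightarrow> 'q) \<Rightarrow> ('q \<Rightarrow> 'a \<Rightarrow> 'q) \<Rightarrow> ('q \<times> 'q) set \<Rightarrow> bool" where
  "tensA_closed lact ract S \<longleftrightarrow>
     (\<forall>x y x' y'. (x, y) \<in> S \<longrightarrow> x' \<le> x \<longrightarrow> y' \<le> y \<longrightarrow> (x', y') \<in> S) \<and>
     (\<forall>X y. (\<forall>x\<in>X. (x, y) \<in> S) \<longrightarrow> (Sup X, y) \<in> S) \<and>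
     (\<forall>x Y. (\<forall>y\<in>Y. (x, y) \<in> S) \<longrightarrow> (x, Sup Y) \<in> S) \<and>
     (\<forall>x y a. (x, lact a y) \<in> S \<longleftrightarrow> (ract x a, y) \<in> S)"

definition tjoin ::
  "('a \<Rightarrow> 'q::complete_lattice \<Rightarrow> 'q) \<Rightarrow> ('q \<Rightarrow> 'a \<Rightarrow> 'q) \<Rightarrow> ('q \<times> 'q) set set \<Rightarrow> ('q \<times> 'q) set" where
  "tjoin lact ract F = \<Inter>{S. tensA_closed lact ract S \<and> \<Union>F \<subseteq> S}"

definition tens ::
  "('a \<Rightarrow> 'q::complete_lattice \<Rightarrow> 'q) \<Rightarrow> ('q \<Rightarrow> 'a \<Rightarrow> 'q) \<Rightarrow> 'q \<Rightarrow> 'q \<Rightarrow> ('q \<times> 'q) set" where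
  "tens lact ract x y = tjoin lact ract {{(x, y)}}"

definition tensA3_closed ::
  "('a \<Rightarrow> 'q::complete_lattice \<Rightarrow> 'q) \<Rightarrow> ('q \<Rightarrow> 'a \<Rightarrow> 'q) \<Rightarrow> ('q \<times> 'q \<times> 'q) set \<Rightarrow> bool" where
  "tensA3_closed lact ract S \<longleftrightarrow>
     (\<forall>x y z x' y' z'. (x, y, z) \<in> S \<longrightarrow> x' \<le> x \<longrightarrow> y' \<le> y \<longrightarrow> z' \<le> z \<longrightarrow> (x', y', z') \<in> S) \<and>
     (\<forall>X y z. (\<forall>x\<in>X. (x, y, z) \<in> S) \<longrightarrow> (Sup X, y, z) \<in> S) \<and>
     (\<forall>x Y z. (\<forall>y\<in>Y. (x, y, z) \<in> S) \<longrightarrow> (x, Sup Y, z) \<in> S) \<and>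
     (\<forall>x y Z. (\<forall>z\<in>Z. (x, y, z) \<in> S) \<longrightarrow> (x, y, Sup Z) \<in> S) \<and>
     (\<forall>x y z a. (x, lact a y, z) \<in> S \<longleftrightarrow> (ract x a, y, z) \<in> S) \<and>
     (\<forall>x y z a. (x, y, lact a z) \<in> S \<longleftrightarrow> (x, ract y a, z) \<in> S)"

definition tjoin3 ::
  "('a \<Rightarrow> 'q::complete_lattice \<Rightarrow> 'q) \<Rightarrow> ('q \<Rightarrow> 'a \<Rightarrow> 'q) \<Rightarrow> ('q \<times> 'q \<times> 'q) set set \<Rightarrow> ('q \<times> 'q \<times> 'q) set" where
  "tjoin3 lact ract F = \<Inter>{S. tensA3_closed lact ract S \<and> \<Union>F \<subseteq> S}"

definition tens3 ::
  "('a \<Rightarrow> 'q::complete_lattice \<Rightarrow> 'q) \<Rightarrow> ('q \<Rightarrow> 'a \<Rightarrow> 'q) \<Rightarrow> 'q \<Rightarrow> 'q \<Rightarrow> 'q \<Rightarrow> ('q \<times> 'q \<times> 'q) set" where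
  "tens3 lact ract x y z = tjoin3 lact ract {{(x, y, z)}}"

definition muA :: "('q::complete_lattice \<Rightarrow> 'q \<Rightarrow> 'q) \<Rightarrow> ('q \<times> 'q) set \<Rightarrow> 'q" where
  "muA mult S = Sup {mult x y | x y. (x, y) \<in> S}"

definition muA_radj ::
  "('a \<Rightarrow> 'q::complete_lattice \<Rightarrow> 'q) \<Rightarrow> ('q \<Rightarrow> 'a \<Rightarrow> 'q) \<Rightarrow> ('q \<Rightarrow> 'q \<Rightarrow> 'q) \<Rightarrow> 'q \<Rightarrow> ('q \<times> 'q) set" where
  "muA_radj lact ract mult a = tjoin lact ract {S. tensA_closed lact ract S \<and> muA mult S \<le> a}"

definition multiplicative ::
  "('a \<Rightarrow> 'q::complete_lattice \<Rightarrow> 'q) \<Rightarrow> ('q \<Rightarrow> 'a \<Rightarrow> 'q) \<Rightarrow> ('q \<Rightarrow> 'q \<Rightarrow> 'q) \<Rightarrow> bool" where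
  "multiplicative lact ract mult \<longleftrightarrow>
     (\<forall>F. muA_radj lact ract mult (Sup F) = tjoin lact ract (muA_radj lact ract mult ` F))"

definition d_star :: "('a \<Rightarrow> 'q::complete_lattice \<Rightarrow> 'q) \<Rightarrow> 'a \<Rightarrow> 'q" where
  "d_star lact a = lact a top"

definition r_star :: "('a \<Rightarrow> 'q::complete_lattice \<Rightarrow> 'q) \<Rightarrow> ('q \<Rightarrow> 'q) \<Rightarrow> 'a \<Rightarrow> 'q" where
  "r_star lact star = star \<circ> d_star lact"

definition pi1_star ::
  "('a \<Rightarrow> 'q::complete_lattice \<Rightarrow> 'q) \<Rightarrow> ('q \<Rightarrow> 'a \<Rightarrow> 'q) \<Rightarrow> 'q \<Rightarrow> ('q \<times> 'q) set" where
  "pi1_star lact ract x = tens lact ract x top"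

definition pi2_star ::
  "('a \<Rightarrow> 'q::complete_lattice \<Rightarrow> 'q) \<Rightarrow> ('q \<Rightarrow> 'a \<Rightarrow> 'q) \<Rightarrow> 'q \<Rightarrow> ('q \<times> 'q) set" where
  "pi2_star lact ract y = tens lact ract top y"

definition m_star ::
  "('a \<Rightarrow> 'q::complete_lattice \<Rightarrow> 'q) \<Rightarrow> ('q \<Rightarrow> 'a \<Rightarrow> 'q) \<Rightarrow> ('q \<Rightarrow> 'q \<Rightarrow> 'q) \<Rightarrow> 'q \<Rightarrow> ('q \<times> 'q) set" where
  "m_star lact ract mult a = tjoin lact ract {tens lact ract x y | x y. mult x y \<le> a}"

text \<open>(m \<times>_{G_0} id)^* = m^* \<otimes> id : Q \<otimes>_A Q \<rightarrow> Q \<otimes>_A Q \<otimes>_A Q, determined by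
  x \<otimes> y \<mapsto> m^*(x) \<otimes> y = \<Or>_{uv \<le> x} u \<otimes> v \<otimes> y.\<close>
definition m_id_star ::
  "('a \<Rightarrow> 'q::complete_lattice \<Rightarrow> 'q) \<Rightarrow> ('q \<Rightarrow> 'a \<Rightarrow> 'q) \<Rightarrow> ('q \<Rightarrow> 'q \<Rightarrow> 'q)
     \<Rightarrow> ('q \<times> 'q) set \<Rightarrow> ('q \<times> 'q \<times> 'q) set" where
  "m_id_star lact ract mult S =
     tjoin3 lact ract {tens3 lact ract u v y | u v y. \<exists>x. (x, y) \<in> S \<and> mult u v \<le> x}"

definition id_m_star ::
  "('a \<Rightarrow> 'q::complete_lattice \<Rightarrow> 'q) \<Rightarrow> ('q \<Rightarrow> 'a \<Rightarrow> 'q) \<Rightarrow> ('q \<Rightarrow> 'q \<Rightarrow> 'q)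
     \<Rightarrow> ('q \<times> 'q) set \<Rightarrow> ('q \<times> 'q \<times> 'q) set" where
  "id_m_star lact ract mult S =
     tjoin3 lact ract {tens3 lact ract x u v | x u v. \<exists>y. (x, y) \<in> S \<and> mult u v \<le> y}"

text \<open>\<langle>i \<circ> \<pi>_2, i \<circ> \<pi>_1\<rangle>^* : Q \<otimes>_A Q \<rightarrow> Q \<otimes>_A Q, x \<otimes> y \<mapsto> y^* \<otimes> x^*.\<close>
definition twist_star ::
  "('a \<Rightarrow> 'q::complete_lattice \<Rightarrow> 'q) \<Rightarrow> ('q \<Rightarrow> 'a \<Rightarrow> 'q) \<Rightarrow> ('q \<Rightarrow> 'q)
     \<Rightarrow> ('q \<times> 'q) set \<Rightarrow> ('q \<times> 'q) set" where
  "twist_star lact ract star S = tjoin lact ract {tens lact ract (star y) (star x) | x y. (x, y) \<in> S}"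

end

theory Submission
  imports Defs
begin

text \<open>Since multiplication preserves joins in each variable and is A-balanced, the set of
  pairs (x, y) with xy \<le> a is already an element of Q \<otimes>_A Q; so m^*(a) is this set, which is
  also the value of the right adjoint of \<mu>_A at a. Multiplicativity then makes m^* preserve
  joins, meets are intersections, and associativity and the compatibility with the involution
  reduce to (uv)w = u(vw) and (xy)^* = y^*x^*. The support does the rest: it is the left adjoint
  of d^*, with Frobenius reciprocity by equivariance, and the inequality
  x \<triangleleft> \<varsigma>(y) \<le> xyy^*, together with y = \<varsigma>(y) \<triangleright> y, puts every pair with xy \<le> a \<triangleright> 1
  below (a \<triangleright> 1) \<otimes> 1 in Q \<otimes>_A Q (symmetrically for r).\<close>

lemma Sup_preserving_mono:
  fixes f :: "'b::complete_lattice \<Rightarrow> 'c::complete_lattice"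
  assumes f_Sup: "\<And>X. f (Sup X) = (SUP x\<in>X. f x)" and "x \<le> y"
  shows "f x \<le> f y"
proof -
  have "f y = f (Sup {x, y})" using \<open>x \<le> y\<close> by (simp add: sup.absorb2)
  also have "\<dots> = sup (f x) (f y)" using f_Sup[of "{x, y}"] by simp
  finally show ?thesis by (metis sup.cobounded1)
qed

lemma tensA_closed_Inter:
  "(\<And>S. S \<in> \<S> \<Longrightarrow> tensA_closed lact ract S) \<Longrightarrow> tensA_closed lact ract (\<Inter>\<S>)"
  unfolding tensA_closed_def Inter_iff by (intro conjI allI impI; meson)

lemma tensA_closed_tjoin: "tensA_closed lact ract (tjoin lact ract F)"
  unfolding tjoin_def by (rule tensA_closed_Inter) simp

lemma tensA_closed_downward:
  "tensA_closed lact ract S \<Longrightarrow> (x, y) \<in> S \<Longrightarrow> x' \<le> x \<Longrightarrow> y' \<le> y \<Longrightarrow> (x', y') \<in> S"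
  unfolding tensA_closed_def by metis

lemma tensA_closed_balanced:
  "tensA_closed lact ract S \<Longrightarrow> (x, lact a y) \<in> S \<longleftrightarrow> (ract x a, y) \<in> S"
  unfolding tensA_closed_def by metis

lemma tensA_closed_tens: "tensA_closed lact ract (tens lact ract x y)"
  unfolding tens_def by (rule tensA_closed_tjoin)

lemma tjoin_eq_closed:
  assumes "tensA_closed lact ract S" and "\<Union>F = S"
  shows "tjoin lact ract F = S"
  using assms unfolding tjoin_def by blast

lemma mem_tens_self: "(x, y) \<in> tens lact ract x y"
  unfolding tens_def tjoin_def by blast

lemma tens_subset_iff: "tensA_closed lact ract S \<Longrightarrow> tens lact ract x y \<subseteq> S \<longleftrightarrow> (x, y) \<in> S"
  unfolding tens_def tjoin_def by blast

lemma tjoin_tens_closed: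
  assumes "tensA_closed lact ract S"
  shows "tjoin lact ract {tens lact ract x y | x y. (x, y) \<in> S} = S"
proof (rule tjoin_eq_closed[OF assms])
  show "\<Union>{tens lact ract x y | x y. (x, y) \<in> S} = S"
  proof
    show "\<Union>{tens lact ract x y | x y. (x, y) \<in> S} \<subseteq> S"
      using tens_subset_iff[OF assms] by blast
    show "S \<subseteq> \<Union>{tens lact ract x y | x y. (x, y) \<in> S}"
      using mem_tens_self by fastforce
  qed
qed

locale AA_quantale_struct =
  fixes lact :: "'a::complete_lattice \<Rightarrow> 'q::complete_lattice \<Rightarrow> 'q"
    and ract :: "'q \<Rightarrow> 'a \<Rightarrow> 'q"
    and mult :: "'q \<Rightarrow> 'q \<Rightarrow> 'q"
  assumes quantale: "AA_quantale lact ract mult"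
begin

lemma
  shows lact_Sup_left: "lact (Sup A) x = (SUP a\<in>A. lact a x)"
    and lact_Sup_right: "lact a (Sup X) = (SUP x\<in>X. lact a x)"
    and ract_Sup_left: "ract (Sup X) a = (SUP x\<in>X. ract x a)"
    and ract_Sup_right: "ract x (Sup A) = (SUP a\<in>A. ract x a)"
    and lact_top: "lact top x = x"
    and lact_inf: "lact (inf a b) x = lact a (lact b x)"
    and ract_top: "ract x top = x"
    and mult_assoc: "mult (mult x y) z = mult x (mult y z)"
    and mult_Sup_left: "mult (Sup X) y = (SUP x\<in>X. mult x y)"
    and mult_Sup_right: "mult x (Sup Y) = (SUP y\<in>Y. mult x y)"
    and mult_lact: "mult (lact a x) y = lact a (mult x y)"
    and mult_ract: "mult (ract x a) y = mult x (lact a y)"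
    and ract_mult: "ract (mult x y) a = mult x (ract y a)"
  using quantale unfolding AA_quantale_def bimodule_def by simp_all

lemma lact_mono: "a \<le> b \<Longrightarrow> x \<le> y \<Longrightarrow> lact a x \<le> lact b y"
  using Sup_preserving_mono[of "\<lambda>a. lact a x", OF lact_Sup_left]
    Sup_preserving_mono[of "lact b", OF lact_Sup_right] order_trans by blast

lemma ract_mono: "x \<le> y \<Longrightarrow> a \<le> b \<Longrightarrow> ract x a \<le> ract y b"
  using Sup_preserving_mono[of "\<lambda>x. ract x a", OF ract_Sup_left]
    Sup_preserving_mono[of "ract y", OF ract_Sup_right] order_trans by blast

lemma mult_mono: "x \<le> x' \<Longrightarrow> y \<le> y' \<Longrightarrow> mult x y \<le> mult x' y'"
  using Sup_preserving_mono[of "\<lambda>x. mult x y", OF mult_Sup_left]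
    Sup_preserving_mono[of "mult x'", OF mult_Sup_right] order_trans by blast

lemma ex_ge_left_mult_le_iff: "(\<exists>x. mult x y \<le> a \<and> u \<le> x) \<longleftrightarrow> mult u y \<le> a"
  using mult_mono order_trans by blast

lemma ex_ge_right_mult_le_iff: "(\<exists>y. mult x y \<le> a \<and> v \<le> y) \<longleftrightarrow> mult x v \<le> a"
  using mult_mono order_trans by blast

lemma tensA_closed_mult_le: "tensA_closed lact ract {(x, y). mult x y \<le> a}"
  unfolding tensA_closed_def
  by (auto simp: mult_Sup_left mult_Sup_right mult_ract SUP_le_iff intro: order_trans[OF mult_mono])

lemma m_star_eq_mult_le: "m_star lact ract mult a = {(x, y). mult x y \<le> a}"
  unfolding m_star_def using tjoin_tens_closed[OF tensA_closed_mult_le] by simp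

lemma muA_radj_eq_m_star: "muA_radj lact ract mult a = m_star lact ract mult a"
proof -
  have "muA mult S \<le> a \<longleftrightarrow> S \<subseteq> {(x, y). mult x y \<le> a}" for S
    unfolding muA_def by (auto simp: Sup_le_iff)
  then have "\<Union>{S. tensA_closed lact ract S \<and> muA mult S \<le> a} = {(x, y). mult x y \<le> a}"
    using tensA_closed_mult_le by blast
  then show ?thesis
    unfolding muA_radj_def m_star_eq_mult_le by (rule tjoin_eq_closed[OF tensA_closed_mult_le])
qed

lemma m_star_Sup:
  assumes "multiplicative lact ract mult"
  shows "m_star lact ract mult (Sup F) = tjoin lact ract (m_star lact ract mult ` F)"
  using assms unfolding multiplicative_def muA_radj_eq_m_star by blast

lemma m_star_inf: "m_star lact ract mult (inf a b) = m_star lact ract mult a \<inter> m_star lact ract mult b"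
  by (auto simp: m_star_eq_mult_le)

lemma m_star_top: "m_star lact ract mult top = UNIV"
  by (simp add: m_star_eq_mult_le)

lemma m_star_assoc:
  "m_id_star lact ract mult (m_star lact ract mult a) = id_m_star lact ract mult (m_star lact ract mult a)"
  unfolding m_id_star_def id_m_star_def m_star_eq_mult_le
  by (simp add: ex_ge_left_mult_le_iff ex_ge_right_mult_le_iff mult_assoc)

lemma d_star_frame_hom:
  assumes based: "\<And>a x y. inf (lact a x) y = lact a (inf x y)"
  shows "frame_hom (d_star lact)"
  unfolding frame_hom_def d_star_def
  by (simp add: lact_Sup_left lact_inf lact_top based image_image)

end

locale involutive_AA_quantale_struct =
  fixes lact :: "'a::complete_lattice \<Rightarrow> 'q::complete_lattice \<Rightarrow> 'q"
    and ract :: "'q \<Rightarrow> 'a \<Rightarrow> 'q"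
    and mult :: "'q \<Rightarrow> 'q \<Rightarrow> 'q"
    and star :: "'q \<Rightarrow> 'q"
  assumes involutive: "involutive_AA_quantale lact ract mult star"

sublocale involutive_AA_quantale_struct \<subseteq> AA_quantale_struct
  using involutive by unfold_locales (simp add: involutive_AA_quantale_def)

context involutive_AA_quantale_struct
begin

lemma
  shows star_Sup: "star (Sup X) = (SUP x\<in>X. star x)"
    and star_star: "star (star x) = x"
    and star_mult: "star (mult x y) = mult (star y) (star x)"
    and star_lact_ract: "star (lact a (ract x b)) = lact b (ract (star x) a)"
  using involutive unfolding involutive_AA_quantale_def by simp_all

lemma star_mono: "x \<le> y \<Longrightarrow> star x \<le> star y"
  using Sup_preserving_mono[of star, OF star_Sup] .

lemma star_le_iff: "star x \<le> y \<longleftrightarrow> x \<le> star y"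
  by (metis star_mono star_star)

lemma star_top: "star top = top"
  by (metis star_le_iff top.extremum top.extremum_uniqueI)

lemma star_ract: "star (ract x a) = lact a (star x)"
  using star_lact_ract[of top x a] by (simp add: lact_top ract_top)

lemma star_lact: "star (lact a x) = ract (star x) a"
  by (metis star_ract star_star)

lemma star_frame_hom: "frame_hom star"
  unfolding frame_hom_def
proof (intro conjI allI)
  show "star (Sup X) = Sup (star ` X)" for X
    by (rule star_Sup)
  show "star (inf x y) = inf (star x) (star y)" for x y
  proof (rule antisym)
    show "star (inf x y) \<le> inf (star x) (star y)"
      by (simp add: star_mono)
    have "star (inf (star x) (star y)) \<le> inf x y"
      using star_mono[OF inf_le1, of "star x" "star y"] star_mono[OF inf_le2, of "star x" "star y"]
      by (simp add: star_star)
    then show "inf (star x) (star y) \<le> star (inf x y)"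
      by (simp only: star_le_iff)
  qed
  show "star top = top"
    by (rule star_top)
qed

lemma mult_le_star_iff: "mult x y \<le> star a \<longleftrightarrow> mult (star y) (star x) \<le> a"
  by (simp flip: star_le_iff star_mult)

lemma m_star_star: "m_star lact ract mult (star a) = twist_star lact ract star (m_star lact ract mult a)"
proof -
  have "{tens lact ract (star y) (star x) | x y. mult x y \<le> a}
      = {tens lact ract x y | x y. mult x y \<le> star a}"
  proof (intro set_eqI iffI)
    fix t assume "t \<in> {tens lact ract (star y) (star x) | x y. mult x y \<le> a}"
    then obtain x y where "t = tens lact ract (star y) (star x)" and "mult x y \<le> a"
      by blast
    moreover from \<open>mult x y \<le> a\<close> have "mult (star y) (star x) \<le> star a"
      by (simp add: mult_le_star_iff star_star)
    ultimately show "t \<in> {tens lact ract x y | x y. mult x y \<le> star a}"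
      by blast
  next
    fix t assume "t \<in> {tens lact ract x y | x y. mult x y \<le> star a}"
    then obtain x y where t: "t = tens lact ract x y" and "mult x y \<le> star a"
      by blast
    then have "mult (star y) (star x) \<le> a"
      by (simp add: mult_le_star_iff)
    moreover have "t = tens lact ract (star (star x)) (star (star y))"
      by (simp add: t star_star)
    ultimately show "t \<in> {tens lact ract (star y) (star x) | x y. mult x y \<le> a}"
      by blast
  qed
  then show ?thesis
    unfolding twist_star_def m_star_def[of _ _ _ "star a"] m_star_eq_mult_le by simp
qed

end

locale supported_quantale = involutive_AA_quantale_struct +
  fixes supp :: "'q::complete_lattice \<Rightarrow> 'a::complete_lattice"
  assumes support: "support lact mult star supp"
begin

lemma
  shows supp_Sup: "supp (Sup X) = (SUP x\<in>X. supp x)"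
    and lact_supp_le: "lact (supp x) y \<le> mult (mult x (star x)) y"
    and lact_supp_self: "lact (supp x) x = x"
  using support unfolding support_def by simp_all

lemma supp_mono: "x \<le> y \<Longrightarrow> supp x \<le> supp y"
  using Sup_preserving_mono[of supp, OF supp_Sup] .

lemma ract_supp_le: "ract x (supp y) \<le> mult (mult x y) (star y)"
proof -
  have "ract x (supp y) = star (lact (supp y) (star x))"
    by (simp add: star_lact star_star)
  also have "\<dots> \<le> star (mult (mult y (star y)) (star x))"
    by (rule star_mono[OF lact_supp_le])
  also have "\<dots> = mult (mult x y) (star y)"
    by (simp add: star_mult star_star mult_assoc)
  finally show ?thesis .
qed

lemma ract_supp_star_self: "ract x (supp (star x)) = x"
  by (metis lact_supp_self star_lact star_star)

lemma mem_tens_if_ract_supp_le: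
  assumes "ract x (supp y) \<le> u" and "y \<le> v"
  shows "(x, y) \<in> tens lact ract u v"
proof -
  have "(ract x (supp y), y) \<in> tens lact ract u v"
    using tensA_closed_downward[OF tensA_closed_tens mem_tens_self assms] .
  then show ?thesis
    using tensA_closed_balanced[OF tensA_closed_tens] lact_supp_self by metis
qed

lemma mem_tens_if_lact_supp_le:
  assumes "x \<le> u" and "lact (supp (star x)) y \<le> v"
  shows "(x, y) \<in> tens lact ract u v"
proof -
  have "(x, lact (supp (star x)) y) \<in> tens lact ract u v"
    using tensA_closed_downward[OF tensA_closed_tens mem_tens_self assms] .
  then show ?thesis
    using tensA_closed_balanced[OF tensA_closed_tens] ract_supp_star_self by metis
qed

lemma m_star_d_star: "m_star lact ract mult (d_star lact a) = pi1_star lact ract (d_star lact a)"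
proof -
  let ?u = "lact a top"
  have absorb: "mult ?u top \<le> ?u"
    by (simp add: mult_lact lact_mono)
  have "(x, y) \<in> tens lact ract ?u top" if "mult x y \<le> ?u" for x y
  proof (rule mem_tens_if_ract_supp_le)
    have "ract x (supp y) \<le> mult (mult x y) (star y)"
      by (rule ract_supp_le)
    also have "\<dots> \<le> mult ?u top"
      using that by (rule mult_mono) simp
    also have "\<dots> \<le> ?u"
      by (rule absorb)
    finally show "ract x (supp y) \<le> ?u" .
  qed simp
  moreover have "tens lact ract ?u top \<subseteq> m_star lact ract mult ?u"
    unfolding m_star_eq_mult_le by (simp add: tens_subset_iff[OF tensA_closed_mult_le] absorb)
  ultimately show ?thesis
    unfolding d_star_def pi1_star_def by (auto simp: m_star_eq_mult_le)
qed

lemma m_star_r_star: "m_star lact ract mult (r_star lact star a) = pi2_star lact ract (r_star lact star a)"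
proof -
  let ?v = "ract top a"
  have r_star_eq: "r_star lact star a = ?v"
    by (simp add: r_star_def d_star_def star_lact star_top)
  have absorb: "mult top ?v \<le> ?v"
    by (simp flip: ract_mult add: ract_mono)
  have "(x, y) \<in> tens lact ract top ?v" if "mult x y \<le> ?v" for x y
  proof (rule mem_tens_if_lact_supp_le)
    have "lact (supp (star x)) y \<le> mult (star x) (mult x y)"
      using lact_supp_le[of "star x" y] by (simp add: star_star mult_assoc)
    also have "\<dots> \<le> mult top ?v"
      using that by (rule mult_mono[rotated]) simp
    also have "\<dots> \<le> ?v"
      by (rule absorb)
    finally show "lact (supp (star x)) y \<le> ?v" .
  qed simp
  moreover have "tens lact ract top ?v \<subseteq> m_star lact ract mult ?v"
    unfolding m_star_eq_mult_le by (simp add: tens_subset_iff[OF tensA_closed_mult_le] absorb)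
  ultimately show ?thesis
    unfolding r_star_eq pi2_star_def by (auto simp: m_star_eq_mult_le)
qed

lemma d_star_open:
  assumes equivariant: "\<And>a x. supp (lact a x) = inf a (supp x)"
    and based: "\<And>a x y. inf (lact a x) y = lact a (inf x y)"
  shows "open_frame_hom (d_star lact)"
  unfolding open_frame_hom_def d_star_def
proof (intro exI[of _ supp] conjI allI)
  fix x a
  show "supp x \<le> a \<longleftrightarrow> x \<le> lact a top"
  proof
    assume "supp x \<le> a"
    then show "x \<le> lact a top"
      using lact_mono[of "supp x" a x top] by (simp add: lact_supp_self)
  next
    assume "x \<le> lact a top"
    then show "supp x \<le> a"
      using supp_mono[of x "lact a top"] by (simp add: equivariant)
  qed
  have "inf x (lact a top) = lact a x"
    by (metis based inf.commute inf_top_left)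
  then show "supp (inf x (lact a top)) = inf (supp x) a"
    by (simp add: equivariant inf.commute)
qed

end

theorem theorem4p20:
  fixes lact :: "'a::complete_lattice \<Rightarrow> 'q::complete_lattice \<Rightarrow> 'q"
    and ract :: "'q \<Rightarrow> 'a \<Rightarrow> 'q"
    and mult :: "'q \<Rightarrow> 'q \<Rightarrow> 'q"
    and star :: "'q \<Rightarrow> 'q"
    and supp :: "'q \<Rightarrow> 'a"
  assumes bqf: "based_quantal_frame lact ract mult star"
    and mult_Q: "multiplicative lact ract mult"
    and eq_supp: "equivariant_support lact mult star supp"
  shows
    \<comment> \<open>d, i are locale maps (inverse images are frame homomorphisms)\<close>
    "frame_hom (d_star lact) \<and> frame_hom star \<and>
     \<comment> \<open>m is a locale map G_2 \<rightarrow> G_1: m^* : Q \<rightarrow> Q \<otimes>_A Q is a frame homomorphism\<close>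
     (\<forall>F. m_star lact ract mult (Sup F) = tjoin lact ract (m_star lact ract mult ` F)) \<and>
     (\<forall>x y. m_star lact ract mult (inf x y) = m_star lact ract mult x \<inter> m_star lact ract mult y) \<and>
     m_star lact ract mult top = UNIV \<and>
     \<comment> \<open>d \<circ> m = d \<circ> \<pi>_1 and r \<circ> m = r \<circ> \<pi>_2\<close>
     (\<forall>a. m_star lact ract mult (d_star lact a) = pi1_star lact ract (d_star lact a)) \<and>
     (\<forall>a. m_star lact ract mult (r_star lact star a) = pi2_star lact ract (r_star lact star a)) \<and>
     \<comment> \<open>associativity: m \<circ> (m \<times> id) = m \<circ> (id \<times> m)\<close>
     (\<forall>a. m_id_star lact ract mult (m_star lact ract mult a)
           = id_m_star lact ract mult (m_star lact ract mult a)) \<and>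
     \<comment> \<open>i is an involution (i \<circ> i = id, d \<circ> i = r) reversing composition: i \<circ> m = m \<circ> \<langle>i\<pi>_2, i\<pi>_1\<rangle>\<close>
     (\<forall>x. star (star x) = x) \<and>
     r_star lact star = star \<circ> d_star lact \<and>
     (\<forall>a. m_star lact ract mult (star a) = twist_star lact ract star (m_star lact ract mult a)) \<and>
     \<comment> \<open>d is open\<close>
     open_frame_hom (d_star lact)"
proof -
  interpret supported_quantale lact ract mult star supp
    using bqf eq_supp
    by unfold_locales (simp_all add: based_quantal_frame_def equivariant_support_def)
  have based: "\<And>a x y. inf (lact a x) y = lact a (inf x y)"
    using bqf by (simp add: based_quantal_frame_def)
  have equivariant: "\<And>a x. supp (lact a x) = inf a (supp x)"
    using eq_supp by (simp add: equivariant_support_def)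
  show ?thesis
    using d_star_frame_hom[OF based] star_frame_hom m_star_Sup[OF mult_Q] m_star_inf m_star_top
      m_star_d_star m_star_r_star m_star_assoc star_star m_star_star d_star_open[OF equivariant based]
    by (simp add: r_star_def)
qed

end
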